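(* Let $f_1,\dots,f_m:\mathbb R^n\to\mathbb R$ be continuously differentiable with $\nabla f_j$ being $L_j$-Lipschitz, and set $L=\max_j L_j$. Let $C_1>0$, $\tau>0$ and $x,y\in\mathbb R^n$ with $\|x\|+\|y\|\le C_1$, and let $\lambda_\tau(x,y)\in\operatorname*{argmin}_{\lambda\in\Delta_m}\{\langle\lambda,F(x)-F(y)\rangle+\frac{\tau}{2}\|DF(y)\lambda\|^2\}$. Then $$\Big\|DF(y)\lambda_\tau(x,y)-\mathrm{proj}_{C(x)}\Big(\frac{y-x}{\tau}\Big)\Big\|\le\sqrt{C_2L}\,\|x-y\|^{1/2}+\sqrt{\frac{10L}{\tau}}\,\|x-y\|,$$ where $C_2:=LC_1+2\max_{1\le j\le m}\|\nabla f_j(0)\|$.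
   Context: $F=(f_1,\dots,f_m)^\top$. $\Delta_m$ is the unit simplex in $\mathbb R^m$. $DF(y)=[\nabla f_1(y),\dots,\nabla f_m(y)]\in\mathbb R^{n\times m}$. $C(x)=\mathrm{conv}\{\nabla f_1(x),\dots,\nabla f_m(x)\}$, and $\mathrm{proj}_C$ is the Euclidean projection onto the closed convex set $C$. *)

theory Defs
  imports "HOL-Analysis.Analysis"
begin

text \<open>Unit unit_simplex in R^m, vectors indexed by 1..m (values outside are irrelevant).\<close>
definition unit_simplex :: "nat \<Rightarrow> (nat \<Rightarrow> real) set" where
  "unit_simplex m = {lam. (\<forall>j\<in>{1..m}. lam j \<ge> 0) \<and> (\<Sum>j=1..m. lam j) = 1}"

text \<open>DF(y) lam = sum_j lam_j grad f_j(y), where g j is the gradient of f j.\<close>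
definition DFmul :: "nat \<Rightarrow> (nat \<Rightarrow> 'a \<Rightarrow> 'a::real_vector) \<Rightarrow> 'a \<Rightarrow> (nat \<Rightarrow> real) \<Rightarrow> 'a" where
  "DFmul m g y lam = (\<Sum>j=1..m. lam j *\<^sub>R g j y)"

definition Cset :: "nat \<Rightarrow> (nat \<Rightarrow> 'a \<Rightarrow> 'a::real_vector) \<Rightarrow> 'a \<Rightarrow> 'a set" where
  "Cset m g x = convex hull ((\<lambda>j. g j x) ` {1..m})"

definition obj :: "nat \<Rightarrow> (nat \<Rightarrow> 'a \<Rightarrow> real) \<Rightarrow> (nat \<Rightarrow> 'a \<Rightarrow> 'a::real_normed_vector)
    \<Rightarrow> real \<Rightarrow> 'a \<Rightarrow> 'a \<Rightarrow> (nat \<Rightarrow> real) \<Rightarrow> real" where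
  "obj m f g \<tau> x y lam = (\<Sum>j=1..m. lam j * (f j x - f j y)) + \<tau> / 2 * (norm (DFmul m g y lam))\<^sup>2"

end

theory Submission
  imports Defs
begin

(* The minimiser lam satisfies the variational inequality of a quadratic on the simplex.
   Replacing F(x) - F(y) by its linearisation DF(y)^T (x - y), at cost L |x - y|^2 per
   component, turns it into  <p - DF(y) mu, p - v> <= 2 L |x - y|^2 / tau  for all mu,
   where p = DF(y) lam and v = (y - x) / tau: p almost satisfies the obtuse-angle
   characterisation of the projection of v onto C(y).  Comparing with the projection
   q = DF(x) mu onto C(x) only costs the Lipschitz distance L |x - y| between DF(y) and
   DF(x), times |p| + |v| + |q|, which is bounded through |g_j(z)| <= |g_j(0)| + L |z|.
   Altogether |p - q|^2 <= C2 L |x - y| + 4 L |x - y|^2 / tau. *)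

lemma lipschitz_gradient_linearization_error:
  fixes f :: "'a::real_inner \<Rightarrow> real" and g :: "'a \<Rightarrow> 'a"
  assumes deriv: "\<And>z. (f has_derivative (\<lambda>h. g z \<bullet> h)) (at z)"
    and lip: "lipschitz_on K UNIV g"
  shows "\<bar>f x - f y - g y \<bullet> (x - y)\<bar> \<le> K * (norm (x - y))\<^sup>2"
proof -
  have K0: "0 \<le> K" using lip by (rule lipschitz_on_nonneg)
  let ?S = "cball y (norm (x - y))"
  have "norm (f x - f y - g y \<bullet> (x - y)) \<le> norm (x - y) * (K * norm (x - y))"
  proof (rule differentiable_bound_linearization[where S = ?S and f' = "\<lambda>z h. g z \<bullet> h"])
    fix t :: real assume "t \<in> {0..1}"
    then show "y + t *\<^sub>R (x - y) \<in> ?S" by (auto simp: dist_norm mult_left_le_one_le)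
  next
    fix z assume "z \<in> ?S"
    show "(f has_derivative (\<lambda>h. g z \<bullet> h)) (at z within ?S)"
      using deriv has_derivative_at_withinI by blast
  next
    fix z assume z: "z \<in> ?S"
    have "norm (g z - g y) \<le> K * dist z y"
      using lipschitz_onD[OF lip] by (simp add: dist_norm[symmetric])
    also have "\<dots> \<le> K * norm (x - y)"
      using z K0 by (intro mult_left_mono) (auto simp: dist_commute)
    finally have gzy: "norm (g z - g y) \<le> K * norm (x - y)" .
    have "onorm ((\<lambda>h. g z \<bullet> h) - (\<lambda>h. g y \<bullet> h)) \<le> norm (g z - g y)"
      by (rule onorm_bound) (simp_all add: inner_diff_left[symmetric] Cauchy_Schwarz_ineq2)
    then show "onorm ((\<lambda>h. g z \<bullet> h) - (\<lambda>h. g y \<bullet> h)) \<le> K * norm (x - y)"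
      using gzy by linarith
  qed simp
  then show ?thesis by (simp add: power2_eq_square mult_ac)
qed

lemma unit_simplex_index_nonempty: "lam \<in> unit_simplex m \<Longrightarrow> 1 \<le> m"
  by (cases m) (auto simp: unit_simplex_def)

lemma convex_combination_in_unit_simplex:
  assumes "lam \<in> unit_simplex m" "mu \<in> unit_simplex m" "0 \<le> t" "t \<le> 1"
  shows "(\<lambda>j. (1 - t) * lam j + t * mu j) \<in> unit_simplex m"
  using assms by (auto simp: unit_simplex_def sum.distrib sum_distrib_left[symmetric])

lemma DFmul_convex_combination:
  "DFmul m g x (\<lambda>j. (1 - t) * lam j + t * mu j) = (1 - t) *\<^sub>R DFmul m g x lam + t *\<^sub>R DFmul m g x mu"
  by (simp add: DFmul_def scaleR_add_left sum.distrib scaleR_sum_right)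

lemma norm_simplex_combination_le:
  fixes h :: "nat \<Rightarrow> 'a::real_normed_vector"
  assumes mu: "mu \<in> unit_simplex m" and bound: "\<And>j. j \<in> {1..m} \<Longrightarrow> norm (h j) \<le> B"
  shows "norm (\<Sum>j=1..m. mu j *\<^sub>R h j) \<le> B"
proof -
  have "norm (\<Sum>j=1..m. mu j *\<^sub>R h j) \<le> (\<Sum>j=1..m. mu j * B)"
    using mu bound
    by (intro order_trans[OF norm_sum] sum_mono) (auto simp: unit_simplex_def intro: mult_left_mono)
  also have "\<dots> = B" using mu by (simp add: unit_simplex_def sum_distrib_right[symmetric])
  finally show ?thesis .
qed

lemma DFmul_in_Cset: "mu \<in> unit_simplex m \<Longrightarrow> DFmul m g x mu \<in> Cset m g x"
  unfolding DFmul_def Cset_def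
  by (rule convex_sum) (auto simp: unit_simplex_def intro: hull_inc)

lemma Cset_eq_DFmul_image: "Cset m g x = DFmul m g x ` unit_simplex m"
proof
  show "DFmul m g x ` unit_simplex m \<subseteq> Cset m g x" using DFmul_in_Cset by blast
next
  have vertex: "g i x \<in> DFmul m g x ` unit_simplex m" if i: "i \<in> {1..m}" for i
  proof
    let ?e = "\<lambda>j. if j = i then 1 else 0 :: real"
    show "?e \<in> unit_simplex m" using i by (simp add: unit_simplex_def)
    have "DFmul m g x ?e = (\<Sum>j=1..m. if j = i then g j x else 0)"
      unfolding DFmul_def by (rule sum.cong) auto
    then show "g i x = DFmul m g x ?e" using i by simp
  qed
  have "convex (DFmul m g x ` unit_simplex m)"
    unfolding convex_alt
    by (auto simp: DFmul_convex_combination[symmetric] intro!: convex_combination_in_unit_simplex)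
  then show "Cset m g x \<subseteq> DFmul m g x ` unit_simplex m"
    unfolding Cset_def using vertex by (intro hull_minimal) auto
qed

lemma compact_Cset: "compact (Cset m g (x::'a::euclidean_space))"
  unfolding Cset_def by (intro finite_imp_compact_convex_hull) auto

lemma nonneg_if_quadratic_nonneg_near_zero:
  fixes b c :: real
  assumes b: "0 \<le> b" and quad: "\<And>t. 0 < t \<Longrightarrow> t \<le> 1 \<Longrightarrow> 0 \<le> t * c + t\<^sup>2 * b"
  shows "0 \<le> c"
proof (rule ccontr)
  assume "\<not> 0 \<le> c"
  define t where "t = min 1 (- c / (b + 1))"
  have "0 < - c / (b + 1)" using \<open>\<not> 0 \<le> c\<close> b by (intro divide_pos_pos) auto
  then have t: "0 < t" "t \<le> 1" by (auto simp: t_def)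
  have "t \<le> - c / (b + 1)" by (simp add: t_def)
  then have "t * (b + 1) \<le> - c" using b by (simp add: field_simps)
  then have "c + t * b < 0" using t by (simp add: algebra_simps)
  then have "t * (c + t * b) < 0" using t(1) by (rule mult_pos_neg[rotated])
  then have "t * c + t\<^sup>2 * b < 0" by (simp add: power2_eq_square algebra_simps)
  then show False using quad[OF t] by linarith
qed

lemma obj_convex_combination:
  fixes g :: "nat \<Rightarrow> 'a \<Rightarrow> 'a::real_inner" and m :: nat and y :: 'a and lam mu :: "nat \<Rightarrow> real"
  defines "p \<equiv> DFmul m g y lam" and "d \<equiv> DFmul m g y mu - DFmul m g y lam"
  shows "obj m f g \<tau> x y (\<lambda>j. (1 - t) * lam j + t * mu j)
    = obj m f g \<tau> x y lam
      + t * ((\<Sum>j=1..m. (mu j - lam j) * (f j x - f j y)) + \<tau> * (d \<bullet> p))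
      + t\<^sup>2 * (\<tau> / 2 * (d \<bullet> d))"
proof -
  have "DFmul m g y (\<lambda>j. (1 - t) * lam j + t * mu j) = p + t *\<^sub>R d"
    by (subst DFmul_convex_combination) (simp add: p_def d_def algebra_simps)
  moreover have "(p + t *\<^sub>R d) \<bullet> (p + t *\<^sub>R d) = p \<bullet> p + 2 * t * (d \<bullet> p) + t\<^sup>2 * (d \<bullet> d)"
    by (simp add: inner_add_left inner_add_right inner_commute power2_eq_square algebra_simps)
  moreover have "(\<Sum>j=1..m. ((1 - t) * lam j + t * mu j) * (f j x - f j y))
      = (\<Sum>j=1..m. lam j * (f j x - f j y)) + t * (\<Sum>j=1..m. (mu j - lam j) * (f j x - f j y))"
    by (simp add: sum_distrib_left sum.distrib[symmetric] algebra_simps)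
  ultimately show ?thesis
    by (simp add: obj_def power2_norm_eq_inner p_def[symmetric] algebra_simps)
qed

lemma argmin_variational_inequality:
  fixes g :: "nat \<Rightarrow> 'a \<Rightarrow> 'a::real_inner"
  assumes lam: "lam \<in> unit_simplex m" and mu: "mu \<in> unit_simplex m" and tau: "\<tau> > 0"
    and argmin: "\<forall>nu \<in> unit_simplex m. obj m f g \<tau> x y lam \<le> obj m f g \<tau> x y nu"
  shows "0 \<le> (\<Sum>j=1..m. (mu j - lam j) * (f j x - f j y))
            + \<tau> * ((DFmul m g y mu - DFmul m g y lam) \<bullet> DFmul m g y lam)"
proof (rule nonneg_if_quadratic_nonneg_near_zero)
  let ?d = "DFmul m g y mu - DFmul m g y lam"
  show "0 \<le> \<tau> / 2 * (?d \<bullet> ?d)" using tau by simp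
  fix t :: real assume "0 < t" "t \<le> 1"
  then have "obj m f g \<tau> x y lam \<le> obj m f g \<tau> x y (\<lambda>j. (1 - t) * lam j + t * mu j)"
    using argmin convex_combination_in_unit_simplex[OF lam mu] by simp
  then show "0 \<le> t * ((\<Sum>j=1..m. (mu j - lam j) * (f j x - f j y))
      + \<tau> * (?d \<bullet> DFmul m g y lam)) + t\<^sup>2 * (\<tau> / 2 * (?d \<bullet> ?d))"
    unfolding obj_convex_combination by linarith
qed

lemma norm_DFmul_diff_le:
  assumes lip: "\<And>j. j \<in> {1..m} \<Longrightarrow> lipschitz_on L UNIV (g j)" and mu: "mu \<in> unit_simplex m"
  shows "norm (DFmul m g y mu - DFmul m g x mu) \<le> L * norm (x - y)"
proof -
  have "DFmul m g y mu - DFmul m g x mu = (\<Sum>j=1..m. mu j *\<^sub>R (g j y - g j x))"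
    by (simp add: DFmul_def scaleR_diff_right sum_subtractf)
  also have "norm \<dots> \<le> L * norm (x - y)"
    using lipschitz_onD[OF lip]
    by (intro norm_simplex_combination_le[OF mu]) (simp add: dist_norm norm_minus_commute)
  finally show ?thesis .
qed

lemma norm_DFmul_le:
  assumes lip: "\<And>j. j \<in> {1..m} \<Longrightarrow> lipschitz_on L UNIV (g j)"
    and g0: "\<And>j. j \<in> {1..m} \<Longrightarrow> norm (g j 0) \<le> G0" and mu: "mu \<in> unit_simplex m"
  shows "norm (DFmul m g z mu) \<le> G0 + L * norm z"
  unfolding DFmul_def
proof (rule norm_simplex_combination_le[OF mu])
  fix j assume j: "j \<in> {1..m}"
  have "norm (g j z - g j 0) \<le> L * norm z"
    using lipschitz_onD[OF lip[OF j], of z 0] by (simp add: dist_norm)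
  then show "norm (g j z) \<le> G0 + L * norm z"
    using g0[OF j] norm_triangle_sub[of "g j z" "g j 0"] by linarith
qed

lemma DFmul_linearization_error:
  fixes f :: "nat \<Rightarrow> 'a::real_inner \<Rightarrow> real"
  assumes grad: "\<And>j z. j \<in> {1..m} \<Longrightarrow> (f j has_derivative (\<lambda>h. g j z \<bullet> h)) (at z)"
    and lip: "\<And>j. j \<in> {1..m} \<Longrightarrow> lipschitz_on L UNIV (g j)" and mu: "mu \<in> unit_simplex m"
  shows "\<bar>(\<Sum>j=1..m. mu j * (f j x - f j y)) - DFmul m g y mu \<bullet> (x - y)\<bar> \<le> L * (norm (x - y))\<^sup>2"
proof -
  have "(\<Sum>j=1..m. mu j * (f j x - f j y)) - DFmul m g y mu \<bullet> (x - y)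
      = (\<Sum>j=1..m. mu j *\<^sub>R (f j x - f j y - g j y \<bullet> (x - y)))"
    by (simp add: DFmul_def inner_sum_left sum_subtractf right_diff_distrib)
  also have "norm \<dots> \<le> L * (norm (x - y))\<^sup>2"
  proof (rule norm_simplex_combination_le[OF mu])
    fix j assume j: "j \<in> {1..m}"
    show "norm (f j x - f j y - g j y \<bullet> (x - y)) \<le> L * (norm (x - y))\<^sup>2"
      using lipschitz_gradient_linearization_error[OF grad[OF j] lip[OF j]] by simp
  qed
  finally show ?thesis by simp
qed

lemma argmin_residual_inner_le:
  fixes g :: "nat \<Rightarrow> 'a \<Rightarrow> 'a::real_inner"
  assumes grad: "\<And>j z. j \<in> {1..m} \<Longrightarrow> (f j has_derivative (\<lambda>h. g j z \<bullet> h)) (at z)"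
    and lip: "\<And>j. j \<in> {1..m} \<Longrightarrow> lipschitz_on L UNIV (g j)"
    and tau: "\<tau> > 0" and lam: "lam \<in> unit_simplex m" and mu: "mu \<in> unit_simplex m"
    and argmin: "\<forall>nu \<in> unit_simplex m. obj m f g \<tau> x y lam \<le> obj m f g \<tau> x y nu"
  shows "(DFmul m g y lam - DFmul m g y mu) \<bullet> (DFmul m g y lam - (1 / \<tau>) *\<^sub>R (y - x))
    \<le> 2 * L * (norm (x - y))\<^sup>2 / \<tau>"
proof -
  let ?p = "DFmul m g y lam" and ?q = "DFmul m g y mu" and ?v = "(1 / \<tau>) *\<^sub>R (y - x)"
  let ?a = "\<lambda>j. f j x - f j y" and ?err = "L * (norm (x - y))\<^sup>2"
  have lin: "\<bar>(\<Sum>j=1..m. nu j * ?a j) - DFmul m g y nu \<bullet> (x - y)\<bar> \<le> ?err"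
    if "nu \<in> unit_simplex m" for nu
    using grad lip that by (rule DFmul_linearization_error)
  have "(\<Sum>j=1..m. (mu j - lam j) * ?a j) = (\<Sum>j=1..m. mu j * ?a j) - (\<Sum>j=1..m. lam j * ?a j)"
    by (simp add: left_diff_distrib sum_subtractf)
  also have "\<dots> \<le> (?q - ?p) \<bullet> (x - y) + 2 * ?err"
    using lin[OF mu] lin[OF lam] unfolding inner_diff_left by linarith
  also have "(?q - ?p) \<bullet> (x - y) = - \<tau> * ((?q - ?p) \<bullet> ?v)"
    using tau by (simp add: inner_diff_right)
  finally have "0 \<le> \<tau> * ((?q - ?p) \<bullet> (?p - ?v)) + 2 * ?err"
    using argmin_variational_inequality[OF lam mu tau argmin] by (simp add: inner_diff_right algebra_simps)
  then have "\<tau> * ((?p - ?q) \<bullet> (?p - ?v)) \<le> 2 * ?err"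
    by (simp add: inner_diff_left algebra_simps)
  then show ?thesis using tau by (simp add: pos_le_divide_eq mult.commute)
qed

lemma perturbed_projection_distance_sq_le:
  fixes p p' q q' v :: "'a::real_inner"
  assumes residual: "(p - q') \<bullet> (p - v) \<le> A" and proj: "(v - q) \<bullet> (p' - q) \<le> 0"
    and close_q: "norm (q' - q) \<le> e" and close_p: "norm (p - p') \<le> e"
  shows "(norm (p - q))\<^sup>2 \<le> A + e * (norm p + norm v) + e * (norm v + norm q)"
proof -
  have e0: "0 \<le> e" using close_q norm_ge_zero order_trans by blast
  have "(q' - q) \<bullet> (p - v) \<le> e * (norm p + norm v)"
    using close_q e0 norm_triangle_ineq4[of p v]
    by (intro order_trans[OF abs_le_D1[OF Cauchy_Schwarz_ineq2]] mult_mono) auto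
  moreover have "(p - p') \<bullet> (v - q) \<le> e * (norm v + norm q)"
    using close_p e0 norm_triangle_ineq4[of v q]
    by (intro order_trans[OF abs_le_D1[OF Cauchy_Schwarz_ineq2]] mult_mono) auto
  moreover have "(norm (p - q))\<^sup>2
      = (p - q') \<bullet> (p - v) + (q' - q) \<bullet> (p - v) + (p - p') \<bullet> (v - q) + (v - q) \<bullet> (p' - q)"
    by (simp add: power2_norm_eq_inner inner_diff_left inner_diff_right inner_commute algebra_simps)
  ultimately show ?thesis using residual proj by linarith
qed

lemma le_sqrt_bound_of_sq_le:
  fixes d a b \<delta> :: real
  assumes sq: "d\<^sup>2 \<le> a * \<delta> + b * \<delta>\<^sup>2" and "0 \<le> a" "0 \<le> b" "0 \<le> \<delta>"
  shows "d \<le> sqrt a * sqrt \<delta> + sqrt b * \<delta>"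
proof -
  have "d \<le> sqrt (a * \<delta> + b * \<delta>\<^sup>2)" using sq by (rule real_le_rsqrt)
  also have "\<dots> \<le> sqrt (a * \<delta>) + sqrt (b * \<delta>\<^sup>2)"
    using assms by (intro sqrt_add_le_add_sqrt) auto
  finally show ?thesis using \<open>0 \<le> \<delta>\<close> by (simp add: real_sqrt_mult)
qed

lemma argmin_residual_bound:
  fixes g :: "nat \<Rightarrow> 'a \<Rightarrow> 'a::euclidean_space"
  assumes grad: "\<And>j z. j \<in> {1..m} \<Longrightarrow> (f j has_derivative (\<lambda>h. g j z \<bullet> h)) (at z)"
    and lip: "\<And>j. j \<in> {1..m} \<Longrightarrow> lipschitz_on L UNIV (g j)"
    and g0: "\<And>j. j \<in> {1..m} \<Longrightarrow> norm (g j 0) \<le> G0"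
    and tau: "\<tau> > 0" and xy: "norm x + norm y \<le> C1" and lam: "lam \<in> unit_simplex m"
    and argmin: "\<forall>mu \<in> unit_simplex m. obj m f g \<tau> x y lam \<le> obj m f g \<tau> x y mu"
  shows "norm (DFmul m g y lam - closest_point (Cset m g x) ((1 / \<tau>) *\<^sub>R (y - x)))
    \<le> sqrt ((L * C1 + 2 * G0) * L) * sqrt (norm (x - y)) + sqrt (10 * L / \<tau>) * norm (x - y)"
proof -
  define \<delta> where "\<delta> = norm (x - y)"
  define v where "v = (1 / \<tau>) *\<^sub>R (y - x)"
  define p where "p = DFmul m g y lam"
  define q where "q = closest_point (Cset m g x) v"
  have "1 \<in> {1..m}" using unit_simplex_index_nonempty[OF lam] by simp
  then have L0: "0 \<le> L" and G00: "0 \<le> G0"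
    using lip g0 lipschitz_on_nonneg norm_ge_zero order_trans by blast+
  have "q \<in> Cset m g x"
    unfolding q_def using compact_imp_closed[OF compact_Cset] DFmul_in_Cset[OF lam, of g x]
    by (intro closest_point_in_set) blast+
  then obtain mu where mu: "mu \<in> unit_simplex m" and q: "q = DFmul m g x mu"
    unfolding Cset_eq_DFmul_image by blast
  have DFmul_le: "norm (DFmul m g z nu) \<le> G0 + L * norm z" if "nu \<in> unit_simplex m" for z nu
    using lip g0 that by (rule norm_DFmul_le)
  have DFmul_diff_le: "norm (DFmul m g y nu - DFmul m g x nu) \<le> L * \<delta>" if "nu \<in> unit_simplex m" for nu
    using lip that unfolding \<delta>_def by (rule norm_DFmul_diff_le)
  have proj: "(v - q) \<bullet> (DFmul m g x lam - q) \<le> 0"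
    unfolding q_def using compact_Cset DFmul_in_Cset[OF lam]
    by (intro closest_point_dot) (auto simp: Cset_def intro: compact_imp_closed)
  have "(norm (p - q))\<^sup>2 \<le> 2 * L * \<delta>\<^sup>2 / \<tau> + L * \<delta> * (norm p + norm v) + L * \<delta> * (norm v + norm q)"
    using argmin_residual_inner_le[OF grad lip tau lam mu argmin] proj DFmul_diff_le[OF mu] DFmul_diff_le[OF lam]
    unfolding p_def q \<delta>_def v_def by (intro perturbed_projection_distance_sq_le) auto
  also have "\<dots> \<le> 2 * L * \<delta>\<^sup>2 / \<tau> + L * \<delta> * (G0 + L * norm y + \<delta> / \<tau>)
      + L * \<delta> * (\<delta> / \<tau> + (G0 + L * norm x))"
    using DFmul_le[OF lam, of y] DFmul_le[OF mu, of x] L0 tau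
    by (intro add_mono mult_left_mono) (auto simp: p_def q v_def \<delta>_def norm_minus_commute)
  also have "\<dots> = (2 * G0 + L * (norm x + norm y)) * L * \<delta> + 4 * L / \<tau> * \<delta>\<^sup>2"
    by (simp add: power2_eq_square field_simps)
  also have "\<dots> \<le> (L * C1 + 2 * G0) * L * \<delta> + 4 * L / \<tau> * \<delta>\<^sup>2"
    using xy L0 by (intro add_right_mono mult_right_mono) (auto simp: \<delta>_def intro: mult_left_mono)
  finally have "norm (p - q) \<le> sqrt ((L * C1 + 2 * G0) * L) * sqrt \<delta> + sqrt (4 * L / \<tau>) * \<delta>"
    using L0 G00 tau order_trans[OF add_nonneg_nonneg[OF norm_ge_zero norm_ge_zero] xy]
    by (intro le_sqrt_bound_of_sq_le) (auto simp: \<delta>_def)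
  also have "\<dots> \<le> sqrt ((L * C1 + 2 * G0) * L) * sqrt \<delta> + sqrt (10 * L / \<tau>) * \<delta>"
    using L0 tau by (intro add_left_mono mult_right_mono) (auto simp: \<delta>_def divide_right_mono)
  finally show ?thesis by (simp add: p_def q_def v_def \<delta>_def)
qed

theorem mainTheorem5:
  fixes f :: "nat \<Rightarrow> real ^ 'n \<Rightarrow> real"
    and g :: "nat \<Rightarrow> real ^ 'n \<Rightarrow> real ^ 'n"
    and Lj :: "nat \<Rightarrow> real"
    and m :: nat and C1 \<tau> :: real and x y :: "real ^ 'n"
    and lam :: "nat \<Rightarrow> real"
  assumes grad: "\<And>j z. j \<in> {1..m} \<Longrightarrow> (f j has_derivative (\<lambda>h. g j z \<bullet> h)) (at z)"
    and cont: "\<And>j. j \<in> {1..m} \<Longrightarrow> continuous_on UNIV (g j)"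
    and lip: "\<And>j. j \<in> {1..m} \<Longrightarrow> lipschitz_on (Lj j) UNIV (g j)"
    and C1: "C1 > 0" and tau: "\<tau> > 0"
    and xy: "norm x + norm y \<le> C1"
    and lam: "lam \<in> unit_simplex m"
    and argmin: "\<forall>mu \<in> unit_simplex m. obj m f g \<tau> x y lam \<le> obj m f g \<tau> x y mu"
  shows "let L = Max (Lj ` {1..m});
             C2 = L * C1 + 2 * Max ((\<lambda>j. norm (g j 0)) ` {1..m})
         in norm (DFmul m g y lam - closest_point (Cset m g x) ((1 / \<tau>) *\<^sub>R (y - x)))
            \<le> sqrt (C2 * L) * sqrt (norm (x - y)) + sqrt (10 * L / \<tau>) * norm (x - y)"
proof -
  define L where "L = Max (Lj ` {1..m})"
  define G0 where "G0 = Max ((\<lambda>j. norm (g j 0)) ` {1..m})"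
  have "lipschitz_on L UNIV (g j)" if "j \<in> {1..m}" for j
    using that by (intro lipschitz_on_le[OF lip[OF that]]) (auto simp: L_def)
  moreover have "norm (g j 0) \<le> G0" if "j \<in> {1..m}" for j
    using that by (auto simp: G0_def)
  ultimately show ?thesis
    unfolding Let_def L_def[symmetric] G0_def[symmetric]
    using argmin_residual_bound[OF grad _ _ tau xy lam argmin] by blast
qed

end
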